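(* Let $K$ be a field and regard $K[x_1,\dots,x_n]$ as $(K[x_1])[\tilde{\bm{x}}]$ with $\tilde{\bm{x}}=(x_2,\dots,x_n)$ and a fixed monomial ordering $\succ$ on monomials in $\tilde{\bm{x}}$. Let $F=\{f_1,\dots,f_s\}\subset(K[x_1])[\tilde{\bm{x}}]\setminus K[x_1]$ with $\operatorname{lm}(f_j)=\tilde{\bm{x}}^\alpha$ for all $1\le j\le s$. If $f:=\sum_{j=1}^s f_j$ satisfies $\operatorname{lm}(f)\prec\tilde{\bm{x}}^\alpha$, then there exist $b,b_1,\dots,b_{s-1}\in K[x_1]\setminus\{0\}$ such that $$b f=\sum_{1\le j<s}b_jS(f_j,f_s).$$ Moreover, for each irreducible polynomial $p\in K[x_1]\setminus K$, the elements of $F$ can be relabeled so that the multiplier $b$ in such a representation is not divisible by $p$.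
   Context: For nonzero $f=\sum c_\alpha\tilde{\bm{x}}^\alpha$ with $c_\alpha\in K[x_1]$, $\operatorname{lm}(f)$ is the $\succ$-largest monomial with nonzero coefficient, $\operatorname{lc}(f)$ its coefficient, $\operatorname{lt}(f)=\operatorname{lc}(f)\operatorname{lm}(f)$. For $a,b\in K[x_1]\setminus\{0\}$, $\gcd$ is monic and $\operatorname{lcm}(a,b)=ab/\gcd(a,b)$. For $f,g\in(K[x_1])[\tilde{\bm{x}}]\setminus K[x_1]$, $S(f,g):=\frac{m\tilde{\bm{x}}^\gamma}{\operatorname{lt}(f)}f-\frac{m\tilde{\bm{x}}^\gamma}{\operatorname{lt}(g)}g$ with $m=\operatorname{lcm}(\operatorname{lc}f,\operatorname{lc}g)$ and $\tilde{\bm{x}}^\gamma=\operatorname{lcm}(\operatorname{lm}f,\operatorname{lm}g)$. *)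

theory Defs
  imports "HOL-Library.Poly_Mapping" "HOL-Computational_Algebra.Computational_Algebra"
begin

text \<open>Monomials in the variables x2..xn (indexed by a finite type 'v) are exponent
vectors finitely supported maps 'v to nat; x^0 = 1.  Elements of (K[x1])[x2..xn] are finitely supported maps from
monomials to coefficients in K[x1] (type 'k poly); multiplication is the convolution
product of Poly_Mapping, and Poly_Mapping.single m c is the term c x^m.\<close>

type_synonym 'v monom = "'v \<Rightarrow>\<^sub>0 nat"
type_synonym ('v, 'k) mpoly1 = "'v monom \<Rightarrow>\<^sub>0 'k poly"

definition monomial_order :: "('v monom \<Rightarrow> 'v monom \<Rightarrow> bool) \<Rightarrow> bool" where
  "monomial_order lessm \<longleftrightarrow>
     (\<forall>a. \<not> lessm a a) \<and>
     (\<forall>a b c. lessm a b \<longrightarrow> lessm b c \<longrightarrow> lessm a c) \<and>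
     (\<forall>a b. a \<noteq> b \<longrightarrow> lessm a b \<or> lessm b a) \<and>
     (\<forall>a b c. lessm a b \<longrightarrow> lessm (a + c) (b + c)) \<and>
     wfP lessm"

definition lm :: "('v monom \<Rightarrow> 'v monom \<Rightarrow> bool) \<Rightarrow> ('v, 'k::field_gcd) mpoly1 \<Rightarrow> 'v monom" where
  "lm lessm f = (THE m. m \<in> Poly_Mapping.keys f \<and> (\<forall>m'\<in>Poly_Mapping.keys f. m' \<noteq> m \<longrightarrow> lessm m' m))"

definition lc :: "('v monom \<Rightarrow> 'v monom \<Rightarrow> bool) \<Rightarrow> ('v, 'k::field_gcd) mpoly1 \<Rightarrow> 'k poly" where
  "lc lessm f = Poly_Mapping.lookup f (lm lessm f)"

definition lt :: "('v monom \<Rightarrow> 'v monom \<Rightarrow> bool) \<Rightarrow> ('v, 'k::field_gcd) mpoly1 \<Rightarrow> ('v, 'k) mpoly1" where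
  "lt lessm f = Poly_Mapping.single (lm lessm f) (lc lessm f)"

definition in_base :: "('v, 'k::field_gcd) mpoly1 \<Rightarrow> bool" where
  "in_base f \<longleftrightarrow> Poly_Mapping.keys f \<subseteq> {0}"

text \<open>lcm of nonzero a, b in K[x1] as in the paper: a b / gcd(a,b), gcd monic
(not normalized to be monic itself).\<close>
definition lcm1 :: "'k::field_gcd poly \<Rightarrow> 'k poly \<Rightarrow> 'k poly" where
  "lcm1 a b = (a * b) div gcd a b"

text \<open>lcm of monomials: componentwise maximum of exponents.\<close>
definition lcm_monom :: "'v monom \<Rightarrow> 'v monom \<Rightarrow> 'v monom" where
  "lcm_monom a b = a + (b - a)"

definition spoly :: "('v monom \<Rightarrow> 'v monom \<Rightarrow> bool) \<Rightarrow> ('v, 'k::field_gcd) mpoly1 \<Rightarrow> ('v, 'k) mpoly1 \<Rightarrow> ('v, 'k) mpoly1" where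
  "spoly lessm f g =
     (let m = lcm1 (lc lessm f) (lc lessm g);
          \<gamma> = lcm_monom (lm lessm f) (lm lessm g)
      in Poly_Mapping.single (\<gamma> - lm lessm f) (m div lc lessm f) * f
         - Poly_Mapping.single (\<gamma> - lm lessm g) (m div lc lessm g) * g)"

abbreviation cst :: "'k::field_gcd poly \<Rightarrow> ('v, 'k) mpoly1" where
  "cst b \<equiv> Poly_Mapping.single 0 b"

end

theory Submission
  imports Defs "HOL-Combinatorics.Transposition"
begin

(* Since all f_j share the leading monomial x^alpha and this monomial cancels in their
   sum, the leading coefficients c_j satisfy c_1 + ... + c_s = 0.  For equal leading
   monomials S(f_j, f_s) = (c_s f_j - c_j f_s) / gcd(c_j, c_s), so for any common divisor d
   of all c_j, writing e_j = c_j / d,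
     (gcd(c_j, c_s) / d) S(f_j, f_s) = e_s f_j - e_j f_s,
   and summing over j < s gives e_s f because e_1 + ... + e_s = 0.  Taking d = 1 yields the
   first claim.  For an irreducible p, put last an f_j whose leading coefficient has the
   least p-multiplicity k and take d = p^k: then the multiplier c_s / p^k is prime to p. *)

lemma monomial_orderD:
  assumes "monomial_order lessm"
  shows "\<not> lessm a a"
    and "lessm a b \<Longrightarrow> lessm b c \<Longrightarrow> lessm a c"
    and "a \<noteq> b \<Longrightarrow> lessm a b \<or> lessm b a"
  using assms unfolding monomial_order_def by blast+

lemma finite_ne_has_greatest_wrt:
  assumes "finite A" "A \<noteq> {}"
    and trans: "\<And>a b c. R a b \<Longrightarrow> R b c \<Longrightarrow> R a c"
    and total: "\<And>a b. a \<noteq> b \<Longrightarrow> R a b \<or> R b a"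
  shows "\<exists>m\<in>A. \<forall>a\<in>A. a \<noteq> m \<longrightarrow> R a m"
  using assms(1,2)
proof (induction A rule: finite_ne_induct)
  case (singleton x)
  then show ?case by simp
next
  case (insert x A)
  then obtain m where "m \<in> A" "\<forall>a\<in>A. a \<noteq> m \<longrightarrow> R a m" by blast
  then show ?case using trans total by (metis insert_iff)
qed

lemma lm_greatest:
  assumes mord: "monomial_order lessm" and "f \<noteq> 0"
  shows "lm lessm f \<in> Poly_Mapping.keys f"
    and "m \<in> Poly_Mapping.keys f \<Longrightarrow> m \<noteq> lm lessm f \<Longrightarrow> lessm m (lm lessm f)"
proof -
  obtain g where g: "g \<in> Poly_Mapping.keys f" "\<forall>a\<in>Poly_Mapping.keys f. a \<noteq> g \<longrightarrow> lessm a g"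
    using finite_ne_has_greatest_wrt[of "Poly_Mapping.keys f" lessm] \<open>f \<noteq> 0\<close>
      monomial_orderD[OF mord] by auto
  have "lm lessm f = g"
    unfolding lm_def
  proof (rule the_equality)
    fix n
    assume "n \<in> Poly_Mapping.keys f \<and> (\<forall>a\<in>Poly_Mapping.keys f. a \<noteq> n \<longrightarrow> lessm a n)"
    with g show "n = g"
      using monomial_orderD(1,2)[OF mord] by metis
  qed (use g in blast)
  then show "lm lessm f \<in> Poly_Mapping.keys f"
    and "m \<in> Poly_Mapping.keys f \<Longrightarrow> m \<noteq> lm lessm f \<Longrightarrow> lessm m (lm lessm f)" for m
    using g by auto
qed

lemma lc_neq_0:
  assumes "monomial_order lessm" "f \<noteq> 0"
  shows "lc lessm f \<noteq> 0"
  using lm_greatest(1)[OF assms] unfolding lc_def by (simp add: in_keys_iff)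

lemma lookup_eq_0_if_lm_less:
  assumes mord: "monomial_order lessm" and "f = 0 \<or> lessm (lm lessm f) a"
  shows "Poly_Mapping.lookup f a = 0"
proof (rule ccontr)
  assume "Poly_Mapping.lookup f a \<noteq> 0"
  then have "a \<in> Poly_Mapping.keys f" "f \<noteq> 0" by (auto simp: in_keys_iff)
  with assms show False
    using lm_greatest(2)[OF mord] monomial_orderD[OF mord] by metis
qed

lemma sum_lc_eq_0_if_lm_cancels:
  assumes "monomial_order lessm"
    and "\<forall>j\<in>A. lm lessm (F j) = \<alpha>"
    and "(\<Sum>j\<in>A. F j) = 0 \<or> lessm (lm lessm (\<Sum>j\<in>A. F j)) \<alpha>"
  shows "(\<Sum>j\<in>A. lc lessm (F j)) = 0"
proof -
  have "(\<Sum>j\<in>A. lc lessm (F j)) = (\<Sum>j\<in>A. Poly_Mapping.lookup (F j) \<alpha>)"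
    using assms(2) by (simp add: lc_def)
  also have "\<dots> = Poly_Mapping.lookup (\<Sum>j\<in>A. F j) \<alpha>"
    by (simp add: lookup_sum)
  also have "\<dots> = 0"
    using lookup_eq_0_if_lm_less[OF assms(1,3)] .
  finally show ?thesis .
qed

lemma single_sum:
  "Poly_Mapping.single k (\<Sum>i\<in>A. f i) = (\<Sum>i\<in>A. Poly_Mapping.single k (f i))"
  by (induction A rule: infinite_finite_induct) (auto simp: single_add)

lemma spoly_eq_if_lm_eq:
  fixes f g :: "('v, 'k::field_gcd) mpoly1"
  assumes "lm lessm f = lm lessm g" "lc lessm f \<noteq> 0" "lc lessm g \<noteq> 0"
  shows "spoly lessm f g =
           cst (lc lessm g div gcd (lc lessm f) (lc lessm g)) * f
         - cst (lc lessm f div gcd (lc lessm f) (lc lessm g)) * g"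
proof -
  have "lcm1 a b div a = b div gcd a b" "lcm1 a b div b = a div gcd a b"
    if "a \<noteq> 0" "b \<noteq> 0" for a b :: "'k poly"
  proof -
    have "lcm1 a b = a * (b div gcd a b)" and "lcm1 a b = b * (a div gcd a b)"
      unfolding lcm1_def by (simp_all add: div_mult_swap mult.commute)
    then show "lcm1 a b div a = b div gcd a b" and "lcm1 a b div b = a div gcd a b"
      using that by (metis nonzero_mult_div_cancel_left)+
  qed
  with assms show ?thesis
    unfolding spoly_def lcm_monom_def by (simp add: Let_def)
qed

lemma scaled_spoly_eq_if_lm_eq:
  fixes f g :: "('v, 'k::field_gcd) mpoly1"
  assumes "lm lessm f = lm lessm g" "lc lessm f \<noteq> 0" "lc lessm g \<noteq> 0"
    and "d dvd lc lessm f" "d dvd lc lessm g"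
  shows "cst (gcd (lc lessm f) (lc lessm g) div d) * spoly lessm f g =
           cst (lc lessm g div d) * f - cst (lc lessm f div d) * g"
proof -
  define h where "h = gcd (lc lessm f) (lc lessm g)"
  have "h \<noteq> 0" "d dvd h" "h dvd lc lessm f" "h dvd lc lessm g"
    using assms(2,4,5) by (simp_all add: h_def)
  then have "(h div d) * (lc lessm g div h) = lc lessm g div d"
    and "(h div d) * (lc lessm f div h) = lc lessm f div d"
    by (simp_all add: div_mult_div_if_dvd)
  then show ?thesis
    using spoly_eq_if_lm_eq[OF assms(1-3)]
    by (simp add: h_def[symmetric] right_diff_distrib mult.assoc[symmetric] mult_single)
qed

lemma sum_scaled_eq_sum_cross_diffs:
  fixes e G :: "nat \<Rightarrow> 'a::comm_ring"
  assumes "1 \<le> s" "(\<Sum>j=1..s. e j) = 0"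
  shows "e s * (\<Sum>j=1..s. G j) = (\<Sum>j=1..<s. e s * G j - e j * G s)"
proof -
  have split: "{1..s} = insert s {1..<s}"
    using assms(1) by auto
  have "(\<Sum>j=1..<s. e j) = - e s"
    using assms(2) unfolding split by (simp add: eq_neg_iff_add_eq_0 add.commute)
  have "(\<Sum>j=1..<s. e s * G j - e j * G s) = e s * (\<Sum>j=1..<s. G j) - (\<Sum>j=1..<s. e j) * G s"
    by (simp only: sum_subtractf sum_distrib_left sum_distrib_right)
  also have "\<dots> = e s * (\<Sum>j=1..<s. G j) + e s * G s"
    using \<open>(\<Sum>j=1..<s. e j) = - e s\<close> by simp
  also have "\<dots> = e s * (\<Sum>j=1..s. G j)"
    unfolding split by (simp add: distrib_left add.commute)
  finally show ?thesis ..
qed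

lemma spoly_representation:
  fixes F :: "nat \<Rightarrow> ('v, 'k::field_gcd) mpoly1"
  assumes "1 \<le> s"
    and lm: "\<forall>j\<in>{1..s}. lm lessm (F j) = \<alpha>"
    and lc: "\<forall>j\<in>{1..s}. lc lessm (F j) \<noteq> 0"
    and lc_sum: "(\<Sum>j=1..s. lc lessm (F j)) = 0"
    and dvd: "\<forall>j\<in>{1..s}. d dvd lc lessm (F j)"
  shows "\<exists>bs. (\<forall>j\<in>{1..<s}. bs j \<noteq> 0) \<and>
           cst (lc lessm (F s) div d) * (\<Sum>j=1..s. F j) =
             (\<Sum>j=1..<s. cst (bs j) * spoly lessm (F j) (F s))"
proof (intro exI conjI)
  define E :: "nat \<Rightarrow> ('v, 'k) mpoly1" where "E j = cst (lc lessm (F j) div d)" for j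
  have s: "s \<in> {1..s}"
    using \<open>1 \<le> s\<close> by simp
  show "\<forall>j\<in>{1..<s}. gcd (lc lessm (F j)) (lc lessm (F s)) div d \<noteq> 0"
    using s lc dvd by (simp add: dvd_div_eq_0_iff)
  have "d \<noteq> 0"
    using s lc dvd by auto
  moreover have "d * (\<Sum>j=1..s. lc lessm (F j) div d) = 0"
    using dvd lc_sum by (simp add: sum_distrib_left)
  ultimately have "(\<Sum>j=1..s. E j) = 0"
    unfolding E_def single_sum[symmetric] by simp
  then have "E s * (\<Sum>j=1..s. F j) = (\<Sum>j=1..<s. E s * F j - E j * F s)"
    by (rule sum_scaled_eq_sum_cross_diffs[OF \<open>1 \<le> s\<close>])
  also have "\<dots> = (\<Sum>j=1..<s. cst (gcd (lc lessm (F j)) (lc lessm (F s)) div d) * spoly lessm (F j) (F s))"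
    using s lm lc dvd by (intro sum.cong refl) (simp add: E_def scaled_spoly_eq_if_lm_eq)
  finally show "cst (lc lessm (F s) div d) * (\<Sum>j=1..s. F j) = \<dots>"
    unfolding E_def .
qed

lemma spoly_representation_reindex:
  fixes F :: "nat \<Rightarrow> ('v, 'k::field_gcd) mpoly1"
  assumes "1 \<le> s" and \<sigma>: "bij_betw \<sigma> {1..s} {1..s}"
    and lm: "\<forall>j\<in>{1..s}. lm lessm (F j) = \<alpha>"
    and lc: "\<forall>j\<in>{1..s}. lc lessm (F j) \<noteq> 0"
    and lc_sum: "(\<Sum>j=1..s. lc lessm (F j)) = 0"
    and dvd: "\<forall>j\<in>{1..s}. d dvd lc lessm (F j)"
  shows "\<exists>bs. (\<forall>j\<in>{1..<s}. bs j \<noteq> 0) \<and>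
           cst (lc lessm (F (\<sigma> s)) div d) * (\<Sum>j=1..s. F j) =
             (\<Sum>j=1..<s. cst (bs j) * spoly lessm (F (\<sigma> j)) (F (\<sigma> s)))"
proof -
  have "\<sigma> j \<in> {1..s}" if "j \<in> {1..s}" for j
    using \<sigma> that bij_betwE by blast
  moreover have "(\<Sum>j=1..s. F (\<sigma> j)) = (\<Sum>j=1..s. F j)"
    and "(\<Sum>j=1..s. lc lessm (F (\<sigma> j))) = 0"
    using sum.reindex_bij_betw[OF \<sigma>, of F] sum.reindex_bij_betw[OF \<sigma>, of "\<lambda>j. lc lessm (F j)"] lc_sum
    by simp_all
  ultimately show ?thesis
    using spoly_representation[OF \<open>1 \<le> s\<close>, of lessm "\<lambda>j. F (\<sigma> j)" \<alpha> d] lm lc dvd by simp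
qed

lemma ex_least_multiplicity_power_dvd:
  assumes "A \<noteq> {}"
  shows "\<exists>a\<in>A. \<forall>x\<in>A. p ^ multiplicity p (c a) dvd c x"
proof -
  obtain a0 where "a0 \<in> A"
    using assms by blast
  then obtain a where "a \<in> A" "\<forall>x\<in>A. multiplicity p (c a) \<le> multiplicity p (c x)"
    using ex_has_least_nat[of "\<lambda>x. x \<in> A" a0 "\<lambda>x. multiplicity p (c x)"] by blast
  then show ?thesis
    by (auto intro: multiplicity_dvd')
qed

theorem lemma4p4:
  fixes lessm :: "('v::finite) monom \<Rightarrow> 'v monom \<Rightarrow> bool"
    and F :: "nat \<Rightarrow> ('v, 'k::field_gcd) mpoly1"
    and s :: nat and \<alpha> :: "'v monom"
  assumes mord: "monomial_order lessm"
    and s1: "1 \<le> s"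
    and dist: "inj_on F {1..s}"
    and notbase: "\<forall>j\<in>{1..s}. \<not> in_base (F j)"
    and lmF: "\<forall>j\<in>{1..s}. lm lessm (F j) = \<alpha>"
    and lmsum: "(\<Sum>j=1..s. F j) = 0 \<or> lessm (lm lessm (\<Sum>j=1..s. F j)) \<alpha>"
  shows "(\<exists>b bs. b \<noteq> 0 \<and> (\<forall>j\<in>{1..<s}. bs j \<noteq> 0) \<and>
            cst b * (\<Sum>j=1..s. F j) = (\<Sum>j=1..<s. cst (bs j) * spoly lessm (F j) (F s)))
       \<and> (\<forall>p :: 'k poly. irreducible p \<and> degree p > 0 \<longrightarrow>
            (\<exists>\<sigma>. bij_betw \<sigma> {1..s} {1..s} \<and>
               (\<exists>b bs. b \<noteq> 0 \<and> (\<forall>j\<in>{1..<s}. bs j \<noteq> 0) \<and>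
                  cst b * (\<Sum>j=1..s. F j) =
                    (\<Sum>j=1..<s. cst (bs j) * spoly lessm (F (\<sigma> j)) (F (\<sigma> s))) \<and>
                  \<not> p dvd b)))"
proof -
  have lc_nz: "\<forall>j\<in>{1..s}. lc lessm (F j) \<noteq> 0"
    using notbase lc_neq_0[OF mord] unfolding in_base_def by (metis empty_subsetI keys_zero)
  note representation =
    spoly_representation_reindex[OF s1 _ lmF lc_nz sum_lc_eq_0_if_lm_cancels[OF mord lmF lmsum]]
  have s: "s \<in> {1..s}"
    using s1 by simp
  show ?thesis
  proof (intro conjI allI impI)
    show "\<exists>b bs. b \<noteq> 0 \<and> (\<forall>j\<in>{1..<s}. bs j \<noteq> 0) \<and>
            cst b * (\<Sum>j=1..s. F j) = (\<Sum>j=1..<s. cst (bs j) * spoly lessm (F j) (F s))"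
      using representation[of id 1] lc_nz s by (simp, blast)
  next
    fix p :: "'k poly"
    assume "irreducible p \<and> degree p > 0"
    then have "\<not> is_unit p"
      by (simp add: irreducible_not_unit)
    obtain j0 where j0: "j0 \<in> {1..s}"
      and dvd: "\<forall>j\<in>{1..s}. p ^ multiplicity p (lc lessm (F j0)) dvd lc lessm (F j)"
      using ex_least_multiplicity_power_dvd[of "{1..s}" p "\<lambda>j. lc lessm (F j)"] s by blast
    define k where "k = multiplicity p (lc lessm (F j0))"
    define \<sigma> where "\<sigma> = transpose j0 s"
    have \<sigma>: "bij_betw \<sigma> {1..s} {1..s}" "\<sigma> s = j0"
      using j0 s by (simp_all add: \<sigma>_def)
    obtain bs where "\<forall>j\<in>{1..<s}. bs j \<noteq> 0"
      and "cst (lc lessm (F (\<sigma> s)) div p ^ k) * (\<Sum>j=1..s. F j) =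
             (\<Sum>j=1..<s. cst (bs j) * spoly lessm (F (\<sigma> j)) (F (\<sigma> s)))"
      using representation[OF \<sigma>(1)] dvd unfolding k_def by blast
    moreover have "lc lessm (F (\<sigma> s)) div p ^ k \<noteq> 0" "\<not> p dvd lc lessm (F (\<sigma> s)) div p ^ k"
      using \<sigma>(2) j0 lc_nz \<open>\<not> is_unit p\<close>
      by (simp_all add: k_def dvd_div_eq_0_iff multiplicity_dvd multiplicity_decompose)
    ultimately show "\<exists>\<sigma>. bij_betw \<sigma> {1..s} {1..s} \<and>
               (\<exists>b bs. b \<noteq> 0 \<and> (\<forall>j\<in>{1..<s}. bs j \<noteq> 0) \<and>
                  cst b * (\<Sum>j=1..s. F j) =
                    (\<Sum>j=1..<s. cst (bs j) * spoly lessm (F (\<sigma> j)) (F (\<sigma> s))) \<and>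
                  \<not> p dvd b)"
      using \<sigma>(1) by blast
  qed
qed

end
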